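(* Let $m>2$ be an odd integer, $n\ge 1$ an integer, and let $M_{2mn}=\langle a,b : a^m=b^{2n}=1,\ bab^{-1}=a^{-1}\rangle$ be the metacyclic group of order $2mn$. Let $\Gamma_{M_{2mn}}$ be its non-commuting graph. Let $t_1,t_2$ be the two roots of the equation $(m-1)x^2-(2m-5)x-m=0$. Then the spectrum of the distance signless Laplacian matrix $D^Q(\Gamma_{M_{2mn}})$ (eigenvalues counted with multiplicity, multiplicities being added if two of the listed values coincide) consists of: (a) $2mn-4$ with multiplicity $m(n-1)$; (b) $(2m+1)n-4$ with multiplicity $m-1$; (c) $(3m-2)n-4$ with multiplicity $(m-1)n-1$; (d) $nt_k(m-1)+(3mn+n-4)$ with multiplicity $1$, for each $k=1,2$.
   Context: For a finite non-abelian group $G$ with centre $Z(G)$, the non-commuting graph $\Gamma_G$ is the simple undirected graph with vertex set $G\setminus Z(G)$, in which two distinct vertices $u,v$ are adjacent if and only if $uv\ne vu$. For a connected graph $H$, $d_{uv}$ denotes the length of a shortest path between $u$ and $v$; the distance matrix $D(H)$ has $(u,v)$-entry $d_{uv}$. The transmission of a vertex $v$ is $\sum_{u} d_{uv}$, and $Tr(H)$ is the diagonal matrix of vertex transmissions. The distance signless Laplacian matrix is $D^Q(H)=Tr(H)+D(H)$. *)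

theory Defs
  imports "HOL-Algebra.Generated_Groups" "Jordan_Normal_Form.Char_Poly"
begin

definition group_center :: "('a, 'b) monoid_scheme \<Rightarrow> 'a set" where
  "group_center G = {z \<in> carrier G. \<forall>x \<in> carrier G. z \<otimes>\<^bsub>G\<^esub> x = x \<otimes>\<^bsub>G\<^esub> z}"

definition nc_vertices :: "('a, 'b) monoid_scheme \<Rightarrow> 'a set" where
  "nc_vertices G = carrier G - group_center G"

definition nc_adj :: "('a, 'b) monoid_scheme \<Rightarrow> 'a \<Rightarrow> 'a \<Rightarrow> bool" where
  "nc_adj G u v \<longleftrightarrow> u \<in> nc_vertices G \<and> v \<in> nc_vertices G \<and> u \<noteq> v
     \<and> u \<otimes>\<^bsub>G\<^esub> v \<noteq> v \<otimes>\<^bsub>G\<^esub> u"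

text \<open>A walk is a nonempty list of vertices with consecutive entries adjacent;
  its length is the number of edges (length of the list minus one).\<close>
definition nc_walk :: "('a, 'b) monoid_scheme \<Rightarrow> 'a list \<Rightarrow> bool" where
  "nc_walk G xs \<longleftrightarrow> xs \<noteq> [] \<and> set xs \<subseteq> nc_vertices G
     \<and> (\<forall>i. Suc i < length xs \<longrightarrow> nc_adj G (xs ! i) (xs ! Suc i))"

definition nc_dist :: "('a, 'b) monoid_scheme \<Rightarrow> 'a \<Rightarrow> 'a \<Rightarrow> nat" where
  "nc_dist G u v = (LEAST k. \<exists>xs. nc_walk G xs \<and> hd xs = u \<and> last xs = v \<and> length xs = Suc k)"

definition nc_trans :: "('a, 'b) monoid_scheme \<Rightarrow> 'a \<Rightarrow> nat" where
  "nc_trans G v = (\<Sum>u \<in> nc_vertices G. nc_dist G u v)"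

definition nc_DQ :: "('a, 'b) monoid_scheme \<Rightarrow> 'a \<Rightarrow> 'a \<Rightarrow> real" where
  "nc_DQ G u v = (if u = v then real (nc_trans G v) else 0) + real (nc_dist G u v)"

definition nc_DQ_mat :: "('a, 'b) monoid_scheme \<Rightarrow> (nat \<Rightarrow> 'a) \<Rightarrow> real mat" where
  "nc_DQ_mat G f = mat (card (nc_vertices G)) (card (nc_vertices G))
     (\<lambda>(i, j). nc_DQ G (f i) (f j))"

end

(* The non-central elements of the metacyclic group are the a^i b^j (i < m, j < 2n)
   other than the b^j with j even, and two of them commute exactly when they lie in the
   same class of a partition into m classes of size n (i fixed, j odd) and one class of
   size (m - 1) n (i <> 0, j even).  So the non-commuting graph is complete
   (m + 1)-partite: distances are 1 between and 2 within classes, and D^Q is constant on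
   blocks apart from a block-constant diagonal.  For such a matrix Sylvester's identity
   det (I + X Y) = det (I + Y X) splits off a factor (x - d_p)^(s_p - 1) for every block
   of size s_p and leaves the characteristic polynomial of the quotient matrix.  The
   (m + 1) x (m + 1) quotient matrix has the same shape, with its m equal classes forming
   one block, so a second reduction leaves a 2 x 2 matrix, whose eigenvalues are read off
   from Vieta's formulas for t_1 and t_2. *)

theory Submission
  imports Defs "HOL-Number_Theory.Cong"
begin

section \<open>Matrices that are constant on the blocks of a partition\<close>

lemma sylvester_determinant_identity:
  fixes X :: "'a :: idom mat"
  assumes X: "X \<in> carrier_mat N k" and Y: "Y \<in> carrier_mat k N"
  shows "det (1\<^sub>m N + X * Y) = det (1\<^sub>m k + Y * X)"
proof -
  let ?M = "four_block_mat (1\<^sub>m N) X (- Y) (1\<^sub>m k)"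
  txt \<open>Both sides are \<open>det ?M\<close>, factoring \<open>?M\<close> into block triangular matrices in two ways.\<close>
  have YX: "Y * X \<in> carrier_mat k k" using X Y by auto
  have upper: "four_block_mat (1\<^sub>m N + X * Y) X (0\<^sub>m k N) (1\<^sub>m k)
      * four_block_mat (1\<^sub>m N) (0\<^sub>m N k) (- Y) (1\<^sub>m k) = ?M"
  proof -
    have "four_block_mat (1\<^sub>m N + X * Y) X (0\<^sub>m k N) (1\<^sub>m k)
        * four_block_mat (1\<^sub>m N) (0\<^sub>m N k) (- Y) (1\<^sub>m k)
      = four_block_mat ((1\<^sub>m N + X * Y) * 1\<^sub>m N + X * (- Y)) ((1\<^sub>m N + X * Y) * 0\<^sub>m N k + X * 1\<^sub>m k)
          (0\<^sub>m k N * 1\<^sub>m N + 1\<^sub>m k * (- Y)) (0\<^sub>m k N * 0\<^sub>m N k + 1\<^sub>m k * 1\<^sub>m k)"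
      using X Y by (intro mult_four_block_mat) auto
    also have "\<dots> = ?M"
    proof (rule cong_four_block_mat)
      show "(1\<^sub>m N + X * Y) * 1\<^sub>m N + X * - Y = 1\<^sub>m N"
        using X Y by (simp add: right_mult_one_mat, intro eq_matI, auto)
      show "0\<^sub>m k N * 0\<^sub>m N k + 1\<^sub>m k * 1\<^sub>m k = (1\<^sub>m k :: 'a mat)"
        by (rule eq_matI) auto
    qed (use X Y in simp_all)
    finally show ?thesis .
  qed
  have lower: "four_block_mat (1\<^sub>m N) (0\<^sub>m N k) (- Y) (1\<^sub>m k)
      * four_block_mat (1\<^sub>m N) X (0\<^sub>m k N) (1\<^sub>m k + Y * X) = ?M"
  proof -
    have "four_block_mat (1\<^sub>m N) (0\<^sub>m N k) (- Y) (1\<^sub>m k)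
        * four_block_mat (1\<^sub>m N) X (0\<^sub>m k N) (1\<^sub>m k + Y * X)
      = four_block_mat (1\<^sub>m N * 1\<^sub>m N + 0\<^sub>m N k * 0\<^sub>m k N) (1\<^sub>m N * X + 0\<^sub>m N k * (1\<^sub>m k + Y * X))
          (- Y * 1\<^sub>m N + 1\<^sub>m k * 0\<^sub>m k N) (- Y * X + 1\<^sub>m k * (1\<^sub>m k + Y * X))"
      using X Y by (intro mult_four_block_mat) auto
    also have "\<dots> = ?M"
    proof (rule cong_four_block_mat)
      show "1\<^sub>m N * 1\<^sub>m N + 0\<^sub>m N k * 0\<^sub>m k N = (1\<^sub>m N :: 'a mat)"
        by (rule eq_matI) auto
      have "- Y * X + 1\<^sub>m k * (1\<^sub>m k + Y * X) = - (Y * X) + (1\<^sub>m k + Y * X)"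
        using X Y YX by (simp add: uminus_mult_left_mat)
      also have "\<dots> = 1\<^sub>m k"
        using X Y by (intro eq_matI) auto
      finally show "- Y * X + 1\<^sub>m k * (1\<^sub>m k + Y * X) = 1\<^sub>m k" .
    qed (use X Y in simp_all)
    finally show ?thesis .
  qed
  have "det ?M = det (1\<^sub>m N + X * Y)"
    unfolding upper[symmetric] using X Y
    by (subst det_mult[of _ "N + k"])
      (auto simp: det_four_block_mat_lower_left_zero[of _ N _ k] det_four_block_mat_upper_right_zero[of _ N _ k])
  moreover have "det ?M = det (1\<^sub>m k + Y * X)"
    unfolding lower[symmetric] using X Y
    by (subst det_mult[of _ "N + k"])
      (auto simp: det_four_block_mat_lower_left_zero[of _ N _ k] det_four_block_mat_upper_right_zero[of _ N _ k])
  ultimately show ?thesis by simp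
qed

definition diagonal_of :: "nat \<Rightarrow> (nat \<Rightarrow> 'a :: zero) \<Rightarrow> 'a mat" where
  "diagonal_of N g = mat N N (\<lambda>(u, v). if u = v then g u else 0)"

lemma diagonal_of_carrier [simp]: "diagonal_of N g \<in> carrier_mat N N"
  by (simp add: diagonal_of_def)

lemma dim_diagonal_of [simp]: "dim_row (diagonal_of N g) = N" "dim_col (diagonal_of N g) = N"
  by (simp_all add: diagonal_of_def)

lemma det_diagonal_of: "det (diagonal_of N g) = (\<Prod>u<N. g u :: 'a :: comm_ring_1)"
proof -
  have "det (diagonal_of N g) = prod_list (diag_mat (diagonal_of N g))"
    by (rule det_upper_triangular) (auto simp: upper_triangular_def diagonal_of_def)
  also have "\<dots> = (\<Prod>u<N. g u)"
    by (simp add: prod_list_diag_prod diagonal_of_def atLeast0LessThan)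
  finally show ?thesis .
qed

lemma index_mult_diagonal_of:
  fixes M :: "'a :: comm_ring_1 mat"
  assumes "M \<in> carrier_mat N K" and "u < N" and "v < K"
  shows "(M * diagonal_of K g) $$ (u, v) = M $$ (u, v) * g v"
    and "(diagonal_of N g * M) $$ (u, v) = g u * M $$ (u, v)"
proof -
  have "(M * diagonal_of K g) $$ (u, v) = (\<Sum>l<K. M $$ (u, l) * (if l = v then g l else 0))"
    using assms by (simp add: diagonal_of_def scalar_prod_def atLeast0LessThan)
  also have "\<dots> = (\<Sum>l<K. if l = v then M $$ (u, v) * g v else 0)"
    by (rule sum.cong) auto
  finally show "(M * diagonal_of K g) $$ (u, v) = M $$ (u, v) * g v"
    using assms by simp
  have "(diagonal_of N g * M) $$ (u, v) = (\<Sum>l<N. (if u = l then g u else 0) * M $$ (l, v))"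
    using assms by (simp add: diagonal_of_def scalar_prod_def atLeast0LessThan)
  also have "\<dots> = (\<Sum>l<N. if l = u then g u * M $$ (u, v) else 0)"
    by (rule sum.cong) auto
  finally show "(diagonal_of N g * M) $$ (u, v) = g u * M $$ (u, v)"
    using assms by simp
qed

text \<open>\<open>quotient_mat k C d (block_size N \<pi>)\<close> is the quotient matrix of the equitable
  partition of \<open>block_mat N \<pi> C d\<close> into the blocks \<open>\<pi> u = p\<close>.\<close>

definition block_size :: "nat \<Rightarrow> (nat \<Rightarrow> nat) \<Rightarrow> nat \<Rightarrow> nat" where
  "block_size N \<pi> p = card {u. u < N \<and> \<pi> u = p}"

definition block_mat :: "nat \<Rightarrow> (nat \<Rightarrow> nat) \<Rightarrow> (nat \<Rightarrow> nat \<Rightarrow> 'a :: semiring_1) \<Rightarrow> (nat \<Rightarrow> 'a) \<Rightarrow> 'a mat"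
  where "block_mat N \<pi> C d = mat N N (\<lambda>(u, v). C (\<pi> u) (\<pi> v) + (if u = v then d (\<pi> u) else 0))"

definition quotient_mat :: "nat \<Rightarrow> (nat \<Rightarrow> nat \<Rightarrow> 'a :: semiring_1) \<Rightarrow> (nat \<Rightarrow> 'a) \<Rightarrow> (nat \<Rightarrow> nat) \<Rightarrow> 'a mat"
  where "quotient_mat k C d s = mat k k (\<lambda>(p, q). C p q * of_nat (s q) + (if p = q then d p else 0))"

lemma poly_char_poly_block_mat:
  fixes C :: "nat \<Rightarrow> nat \<Rightarrow> 'a :: field"
  assumes \<pi>: "\<And>u. u < N \<Longrightarrow> \<pi> u < k" and x: "\<And>p. p < k \<Longrightarrow> x \<noteq> d p"
  shows "poly (char_poly (block_mat N \<pi> C d)) x * (\<Prod>p<k. x - d p)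
    = (\<Prod>p<k. (x - d p) ^ block_size N \<pi> p) * poly (char_poly (quotient_mat k C d (block_size N \<pi>))) x"
proof -
  let ?A = "block_mat N \<pi> C d" and ?s = "block_size N \<pi>"
  let ?Q = "quotient_mat k C d ?s"
  define \<Delta> where "\<Delta> = diagonal_of N (\<lambda>u. x - d (\<pi> u))"
  define D where "D = diagonal_of k (\<lambda>p. x - d p)"
  define R where "R = mat k N (\<lambda>(p, v). C p (\<pi> v))"
  define W where "W = mat N k (\<lambda>(u, p). if \<pi> u = p then 1 / (x - d p) else 0)"
  have R: "R \<in> carrier_mat k N" and W: "- W \<in> carrier_mat N k"
    by (auto simp: R_def W_def)
  txt \<open>\<open>x I - A = \<Delta> (I - W R)\<close> and \<open>x I - Q = (I - R W) D\<close>, so Sylvester's identity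
    relates the two characteristic polynomials.\<close>
  have WR: "(W * R) $$ (u, v) = C (\<pi> u) (\<pi> v) / (x - d (\<pi> u))" if "u < N" "v < N" for u v
  proof -
    have "(W * R) $$ (u, v) = (\<Sum>p<k. (if \<pi> u = p then 1 / (x - d p) else 0) * C p (\<pi> v))"
      using that by (simp add: W_def R_def scalar_prod_def atLeast0LessThan)
    also have "\<dots> = (\<Sum>p<k. if p = \<pi> u then C (\<pi> u) (\<pi> v) / (x - d (\<pi> u)) else 0)"
      by (rule sum.cong) auto
    finally show ?thesis using \<pi>[OF that(1)] by simp
  qed
  have RW: "(R * W) $$ (p, q) = C p q * of_nat (?s q) / (x - d q)" if "p < k" "q < k" for p q
  proof -
    have "(R * W) $$ (p, q) = (\<Sum>v<N. C p (\<pi> v) * (if \<pi> v = q then 1 / (x - d q) else 0))"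
      using that by (simp add: W_def R_def scalar_prod_def atLeast0LessThan)
    also have "\<dots> = (\<Sum>v\<in>{v. v < N \<and> \<pi> v = q}. C p q / (x - d q))"
      by (rule sum.mono_neutral_cong_right) auto
    finally show ?thesis by (simp add: block_size_def)
  qed
  have A_factor: "- char_matrix ?A x = \<Delta> * (1\<^sub>m N + (- W) * R)"
  proof (rule eq_matI)
    fix u v assume "u < dim_row (\<Delta> * (1\<^sub>m N + - W * R))" "v < dim_col (\<Delta> * (1\<^sub>m N + - W * R))"
    then have u: "u < N" and v: "v < N" by (auto simp: \<Delta>_def R_def)
    have "(\<Delta> * (1\<^sub>m N + (- W) * R)) $$ (u, v) = (x - d (\<pi> u)) * (1\<^sub>m N + (- W) * R) $$ (u, v)"
      unfolding \<Delta>_def using u v by (intro index_mult_diagonal_of(2)) (auto simp: W_def R_def)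
    also have "\<dots> = (if u = v then x - d (\<pi> u) else 0) - C (\<pi> u) (\<pi> v)"
      using u v WR[OF u v] x[OF \<pi>[OF u]] by (simp add: W_def R_def field_simps)
    finally show "(- char_matrix ?A x) $$ (u, v) = (\<Delta> * (1\<^sub>m N + - W * R)) $$ (u, v)"
      using u v by (simp add: char_matrix_def block_mat_def)
  qed (auto simp: \<Delta>_def R_def W_def char_matrix_def block_mat_def)
  have Q_factor: "(1\<^sub>m k + R * (- W)) * D = - char_matrix ?Q x"
  proof (rule eq_matI)
    fix p q assume "p < dim_row (- char_matrix ?Q x)" "q < dim_col (- char_matrix ?Q x)"
    then have p: "p < k" and q: "q < k" by (auto simp: quotient_mat_def char_matrix_def)
    have "((1\<^sub>m k + R * (- W)) * D) $$ (p, q) = (1\<^sub>m k + R * (- W)) $$ (p, q) * (x - d q)"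
      unfolding D_def using p q by (intro index_mult_diagonal_of(1)) (auto simp: W_def R_def)
    also have "\<dots> = (if p = q then x - d q else 0) - C p q * of_nat (?s q)"
      using p q RW[OF p q] x[OF q] by (simp add: W_def R_def field_simps)
    finally show "((1\<^sub>m k + R * (- W)) * D) $$ (p, q) = (- char_matrix ?Q x) $$ (p, q)"
      using p q by (simp add: char_matrix_def quotient_mat_def)
  qed (auto simp: quotient_mat_def D_def char_matrix_def R_def)
  have "poly (char_poly ?A) x = det (\<Delta> * (1\<^sub>m N + (- W) * R))"
    unfolding A_factor[symmetric] by (rule char_poly_matrix[of _ N]) (simp add: block_mat_def)
  also have "\<dots> = det \<Delta> * det (1\<^sub>m k + R * (- W))"
    using R W sylvester_determinant_identity[OF W R] by (simp add: det_mult[of _ N] \<Delta>_def)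
  also have "det \<Delta> = (\<Prod>p<k. (x - d p) ^ ?s p)"
  proof -
    have "\<pi> ` {..<N} \<subseteq> {..<k}"
      using \<pi> by auto
    then show ?thesis
      using prod.group[of "{..<N}" "{..<k}" \<pi> "\<lambda>u. x - d (\<pi> u)"]
      by (simp add: \<Delta>_def det_diagonal_of block_size_def)
  qed
  finally have A: "poly (char_poly ?A) x = (\<Prod>p<k. (x - d p) ^ ?s p) * det (1\<^sub>m k + R * (- W))" .
  have "poly (char_poly ?Q) x = det ((1\<^sub>m k + R * (- W)) * D)"
    unfolding Q_factor by (rule char_poly_matrix[of _ k]) (simp add: quotient_mat_def)
  also have "\<dots> = det (1\<^sub>m k + R * (- W)) * (\<Prod>p<k. x - d p)"
    using R W by (simp add: det_mult[of _ k] D_def det_diagonal_of)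
  finally have Q: "poly (char_poly ?Q) x = det (1\<^sub>m k + R * (- W)) * (\<Prod>p<k. x - d p)" .
  show ?thesis
    unfolding A Q by (simp only: ac_simps)
qed

lemma char_poly_block_mat:
  fixes C :: "nat \<Rightarrow> nat \<Rightarrow> 'a :: field_char_0"
  assumes \<pi>: "\<And>u. u < N \<Longrightarrow> \<pi> u < k" and nonempty: "\<And>p. p < k \<Longrightarrow> block_size N \<pi> p \<noteq> 0"
  shows "char_poly (block_mat N \<pi> C d)
    = (\<Prod>p<k. [:- d p, 1:] ^ (block_size N \<pi> p - 1)) * char_poly (quotient_mat k C d (block_size N \<pi>))"
proof -
  let ?s = "block_size N \<pi>"
  define P where "P = (\<Prod>p<k. [:- d p, 1:])"
  define L where "L = char_poly (block_mat N \<pi> C d) * P"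
  define R where "R = (\<Prod>p<k. [:- d p, 1:] ^ ?s p) * char_poly (quotient_mat k C d ?s)"
  have "UNIV - d ` {..<k} \<subseteq> {x. poly (L - R) x = 0}"
    using poly_char_poly_block_mat[where N = N and \<pi> = \<pi> and k = k and d = d and C = C] \<pi>
    by (auto simp: L_def R_def P_def poly_prod)
  moreover have "infinite (UNIV - d ` {..<k})"
    by (simp add: Diff_infinite_finite infinite_UNIV_char_0)
  ultimately have "infinite {x. poly (L - R) x = 0}"
    by (rule infinite_super)
  then have "L = R" using poly_roots_finite[of "L - R"] by auto
  moreover have "(\<Prod>p<k. [:- d p, 1:] ^ ?s p) = P * (\<Prod>p<k. [:- d p, 1:] ^ (?s p - 1))"
    unfolding P_def prod.distrib[symmetric]
    by (rule prod.cong) (use nonempty in \<open>auto simp flip: power_Suc\<close>)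
  moreover have "P \<noteq> 0" by (simp add: P_def)
  ultimately show ?thesis by (simp add: L_def R_def ac_simps)
qed

lemma det_mat_2x2:
  fixes A :: "'a :: comm_ring_1 mat"
  assumes A: "A \<in> carrier_mat 2 2"
  shows "det A = A $$ (0, 0) * A $$ (1, 1) - A $$ (0, 1) * A $$ (1, 0)"
proof -
  have "det A = (\<Sum>i<2. A $$ (i, 0) * cofactor A i 0)"
    by (rule laplace_expansion_column[OF A]) simp
  also have "\<dots> = A $$ (0, 0) * cofactor A 0 0 + A $$ (1, 0) * cofactor A 1 0"
    by (simp add: numeral_2_eq_2)
  moreover have "cofactor A 0 0 = A $$ (1, 1)" and "cofactor A 1 0 = - A $$ (0, 1)"
    using A by (auto simp: cofactor_def det_single mat_delete_def)
  ultimately show ?thesis by (simp add: algebra_simps)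
qed

lemma char_poly_mat_2x2:
  fixes A :: "'a :: comm_ring_1 mat"
  assumes A: "A \<in> carrier_mat 2 2"
  shows "char_poly A = [: A $$ (0, 0) * A $$ (1, 1) - A $$ (0, 1) * A $$ (1, 0), - (A $$ (0, 0) + A $$ (1, 1)), 1:]"
proof -
  have "char_poly A = [:- A $$ (0, 0), 1:] * [:- A $$ (1, 1), 1:] - [:- A $$ (0, 1):] * [:- A $$ (1, 0):]"
    using A unfolding char_poly_def by (subst det_mat_2x2) (auto simp: char_poly_matrix_def)
  then show ?thesis by simp
qed

lemma quadratic_roots_sum_prod:
  fixes A B C t1 t2 :: "'a :: idom"
  assumes t1: "A * t1 ^ 2 + B * t1 + C = 0" and t2: "A * t2 ^ 2 + B * t2 + C = 0" and "t1 \<noteq> t2"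
  shows "A * (t1 + t2) = - B" and "A * (t1 * t2) = C"
proof -
  have "(t1 - t2) * (A * (t1 + t2) + B) = (A * t1 ^ 2 + B * t1 + C) - (A * t2 ^ 2 + B * t2 + C)"
    by (simp add: algebra_simps power2_eq_square)
  then show sum: "A * (t1 + t2) = - B"
    using t1 t2 \<open>t1 \<noteq> t2\<close> by (simp add: eq_neg_iff_add_eq_0)
  have C: "C = - (A * t1 ^ 2 + B * t1)"
    using t1 by (metis add.commute eq_neg_iff_add_eq_0)
  have "A * (t1 * t2) = t1 * (A * (t1 + t2)) - A * t1 ^ 2"
    by (simp add: algebra_simps power2_eq_square)
  also have "\<dots> = C"
    unfolding sum C by (simp add: algebra_simps)
  finally show "A * (t1 * t2) = C" .
qed

section \<open>Complete multipartite non-commuting graphs\<close>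

lemma nc_walk_pair: "nc_walk G [x, y] \<longleftrightarrow> nc_adj G x y"
  by (auto simp: nc_walk_def nc_adj_def less_Suc_eq)

lemma nc_walk_triple: "nc_adj G x y \<Longrightarrow> nc_adj G y z \<Longrightarrow> nc_walk G [x, y, z]"
  by (auto simp: nc_walk_def nc_adj_def less_Suc_eq nth_Cons split: nat.split)

lemma nc_dist_eqI:
  assumes "nc_walk G xs" and "hd xs = u" and "last xs = v" and "length xs = Suc k"
    and "\<And>ys. nc_walk G ys \<Longrightarrow> hd ys = u \<Longrightarrow> last ys = v \<Longrightarrow> Suc k \<le> length ys"
  shows "nc_dist G u v = k"
  unfolding nc_dist_def by (rule Least_equality) (use assms in fastforce)+

text \<open>In a complete multipartite graph with part sizes \<open>s\<close> a vertex of part \<open>p\<close> has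
  transmission \<open>N + s p - 2\<close>; the diagonal of \<open>D\<^sup>Q\<close> exceeds the within-part entry \<open>2\<close>
  by \<open>N + s p - 4\<close>.\<close>

definition multipartite_DQ_diag :: "nat \<Rightarrow> (nat \<Rightarrow> nat) \<Rightarrow> nat \<Rightarrow> real" where
  "multipartite_DQ_diag k s p = real (\<Sum>q<k. s q) + real (s p) - 4"

definition multipartite_DQ_quotient :: "nat \<Rightarrow> (nat \<Rightarrow> nat) \<Rightarrow> real mat" where
  "multipartite_DQ_quotient k s =
     quotient_mat k (\<lambda>p q. if p = q then 2 else 1) (multipartite_DQ_diag k s) s"

locale nc_multipartite =
  fixes G :: "('g, 'c) monoid_scheme" and part :: "'g \<Rightarrow> nat"
  assumes finite_nc_vertices: "finite (nc_vertices G)"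
    and commute_iff_same_part: "\<And>g h. g \<in> nc_vertices G \<Longrightarrow> h \<in> nc_vertices G \<Longrightarrow>
      g \<otimes>\<^bsub>G\<^esub> h = h \<otimes>\<^bsub>G\<^esub> g \<longleftrightarrow> part g = part h"
    and two_parts: "\<exists>g \<in> nc_vertices G. \<exists>h \<in> nc_vertices G. part g \<noteq> part h"
begin

definition part_size :: "nat \<Rightarrow> nat" where
  "part_size p = card {g \<in> nc_vertices G. part g = p}"

lemma nc_adj_iff:
  assumes "g \<in> nc_vertices G" and "h \<in> nc_vertices G"
  shows "nc_adj G g h \<longleftrightarrow> part g \<noteq> part h"
  using commute_iff_same_part[OF assms] assms by (auto simp: nc_adj_def)

lemma nc_dist_eq:
  assumes g: "g \<in> nc_vertices G" and h: "h \<in> nc_vertices G"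
  shows "nc_dist G g h = (if g = h then 0 else if part g = part h then 2 else 1)"
proof -
  have long: "Suc 1 \<le> length ys" if "nc_walk G ys" "hd ys = g" "last ys = h" "g \<noteq> h" for ys
    using that by (cases ys) (auto simp: nc_walk_def Suc_le_eq split: if_splits)
  consider "g = h" | "g \<noteq> h" "part g \<noteq> part h" | "g \<noteq> h" "part g = part h"
    by blast
  then show ?thesis
  proof cases
    case 1
    then show ?thesis
      using g by (intro nc_dist_eqI[of G "[g]"]) (auto simp: nc_walk_def Suc_le_eq)
  next
    case 2
    then show ?thesis
      using g h long by (intro nc_dist_eqI[of G "[g, h]"]) (auto simp: nc_walk_pair nc_adj_iff)
  next
    case 3
    obtain w where w: "w \<in> nc_vertices G" "part w \<noteq> part g"
      using two_parts by metis
    have "Suc 2 \<le> length ys" if ys: "nc_walk G ys" "hd ys = g" "last ys = h" for ys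
    proof (rule ccontr)
      assume "\<not> Suc 2 \<le> length ys"
      with long[OF ys \<open>g \<noteq> h\<close>] have "length ys = 2"
        by simp
      then obtain x y where "ys = [x, y]"
        by (auto simp: numeral_2_eq_2 length_Suc_conv)
      with ys have "ys = [g, h]"
        by simp
      then show False
        using ys(1) 3 g h by (simp add: nc_walk_pair nc_adj_iff)
    qed
    then show ?thesis
      using 3 g h w
      by (intro nc_dist_eqI[of G "[g, w, h]"]) (auto intro!: nc_walk_triple simp: nc_adj_iff)
  qed
qed

lemma nc_trans_eq:
  assumes g: "g \<in> nc_vertices G"
  shows "real (nc_trans G g) = real (card (nc_vertices G)) + real (part_size (part g)) - 2"
proof -
  let ?V = "nc_vertices G"
  have "real (nc_trans G g) + 2 = (\<Sum>w\<in>?V. real (nc_dist G w g) + (if w = g then 2 else 0))"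
    using g finite_nc_vertices by (simp add: nc_trans_def sum.distrib)
  also have "\<dots> = (\<Sum>w\<in>?V. 1 + (if part w = part g then 1 else 0))"
    by (rule sum.cong) (auto simp: nc_dist_eq g)
  also have "\<dots> = real (card ?V) + real (part_size (part g))"
    using finite_nc_vertices by (simp add: sum.distrib sum.If_cases part_size_def Int_def conj_commute)
  finally show ?thesis by simp
qed

lemma card_nc_vertices:
  assumes "part ` nc_vertices G \<subseteq> {..<k}"
  shows "card (nc_vertices G) = (\<Sum>p<k. part_size p)"
proof -
  have "(\<Sum>p<k. part_size p) = (\<Sum>p<k. \<Sum>g\<in>{g \<in> nc_vertices G. part g = p}. 1)"
    by (simp add: part_size_def)
  also have "\<dots> = (\<Sum>g\<in>nc_vertices G. 1)"
    by (rule sum.group) (use finite_nc_vertices assms in auto)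
  finally show ?thesis by simp
qed

context
  fixes f :: "nat \<Rightarrow> 'g"
  assumes f: "bij_betw f {0..<card (nc_vertices G)} (nc_vertices G)"
begin

lemma block_size_part: "block_size (card (nc_vertices G)) (part \<circ> f) = part_size"
proof
  fix p
  let ?U = "{u. u < card (nc_vertices G) \<and> part (f u) = p}"
  have "f ` ?U = {g \<in> nc_vertices G. part g = p}"
    using f by (force simp: bij_betw_def)
  moreover have "inj_on f ?U"
    using f by (auto simp: bij_betw_def intro: inj_on_subset)
  ultimately show "block_size (card (nc_vertices G)) (part \<circ> f) p = part_size p"
    by (simp add: block_size_def part_size_def card_image[symmetric])
qed

lemma nc_DQ_mat_eq_block_mat:
  "nc_DQ_mat G f = block_mat (card (nc_vertices G)) (part \<circ> f) (\<lambda>p q. if p = q then 2 else 1)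
     (\<lambda>p. real (card (nc_vertices G)) + real (part_size p) - 4)" (is "_ = ?B")
proof (rule eq_matI)
  fix u v
  assume "u < dim_row ?B" and "v < dim_col ?B"
  then have u: "u < card (nc_vertices G)" and v: "v < card (nc_vertices G)"
    by (auto simp: block_mat_def)
  then have "f u \<in> nc_vertices G" and "f v \<in> nc_vertices G" and "f u = f v \<longleftrightarrow> u = v"
    using f by (auto simp: bij_betw_def inj_on_def)
  then show "nc_DQ_mat G f $$ (u, v) = ?B $$ (u, v)"
    using u v by (auto simp: nc_DQ_mat_def block_mat_def nc_DQ_def nc_dist_eq nc_trans_eq)
qed (simp_all add: nc_DQ_mat_def block_mat_def)

lemma char_poly_nc_DQ_mat:
  assumes parts: "part ` nc_vertices G \<subseteq> {..<k}"
    and sizes: "\<And>p. p < k \<Longrightarrow> part_size p = s p" and nonempty: "\<And>p. p < k \<Longrightarrow> s p \<noteq> 0"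
  shows "char_poly (nc_DQ_mat G f)
    = (\<Prod>p<k. [:- multipartite_DQ_diag k s p, 1:] ^ (s p - 1)) * char_poly (multipartite_DQ_quotient k s)"
proof -
  let ?N = "card (nc_vertices G)"
  let ?d = "\<lambda>p. real ?N + real (part_size p) - 4"
  have part_f: "part (f u) < k" if "u < ?N" for u
  proof -
    have "f u \<in> nc_vertices G"
      using f that by (auto simp: bij_betw_def)
    then show ?thesis using parts by auto
  qed
  have N: "?N = (\<Sum>q<k. s q)"
    using card_nc_vertices[OF parts] sizes by simp
  have "char_poly (nc_DQ_mat G f) = (\<Prod>p<k. [:- ?d p, 1:] ^ (part_size p - 1))
      * char_poly (quotient_mat k (\<lambda>p q. if p = q then 2 else 1) ?d part_size)"
    unfolding nc_DQ_mat_eq_block_mat block_size_part[symmetric]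
    by (rule char_poly_block_mat)
      (use part_f sizes nonempty in \<open>auto simp: block_size_part\<close>)
  also have "(\<Prod>p<k. [:- ?d p, 1:] ^ (part_size p - 1)) = (\<Prod>p<k. [:- multipartite_DQ_diag k s p, 1:] ^ (s p - 1))"
    by (rule prod.cong) (simp_all add: N sizes multipartite_DQ_diag_def)
  also have "quotient_mat k (\<lambda>p q. if p = q then 2 else 1) ?d part_size = multipartite_DQ_quotient k s"
    by (rule eq_matI) (auto simp: quotient_mat_def multipartite_DQ_quotient_def N sizes multipartite_DQ_diag_def)
  finally show ?thesis .
qed

end

end

section \<open>The metacyclic group\<close>

lemma add_pred_pow_mult_mod_eq_iff:
  fixes m i k :: nat
  assumes m: "odd m" and i: "i < m" and k: "k < m"
  shows "(i + (m - 1) ^ j * k) mod m = (k + (m - 1) ^ l * i) mod m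
    \<longleftrightarrow> (if odd l then i else 0) = (if odd j then k else 0)"
proof -
  define X where "X = (if odd l then int i else 0) - (if odd j then int k else 0)"
  have "m > 0" using m by (rule odd_pos)
  have pred: "[int ((m - 1) ^ e) = (- 1) ^ e] (mod int m)" for e
  proof -
    have "[int m - 1 = - 1] (mod int m)"
      by (simp add: cong_iff_dvd_diff)
    moreover have "int ((m - 1) ^ e) = (int m - 1) ^ e"
      using \<open>m > 0\<close> by (simp add: of_nat_diff)
    ultimately show ?thesis by (simp add: cong_pow)
  qed
  have "(i + (m - 1) ^ j * k) mod m = (k + (m - 1) ^ l * i) mod m
      \<longleftrightarrow> [i + (m - 1) ^ j * k = k + (m - 1) ^ l * i] (mod m)"
    by (simp add: cong_def)
  also have "\<dots> \<longleftrightarrow> [int i + int ((m - 1) ^ j) * int k = int k + int ((m - 1) ^ l) * int i] (mod int m)"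
    by (simp flip: cong_int_iff)
  also have "\<dots> \<longleftrightarrow> [int i + (- 1) ^ j * int k = int k + (- 1) ^ l * int i] (mod int m)"
  proof -
    have "[int x + int ((m - 1) ^ e) * int y = int x + (- 1) ^ e * int y] (mod int m)" for x y e
      using pred by (intro cong_add cong_mult cong_refl)
    then show ?thesis by (meson cong_sym cong_trans)
  qed
  also have "\<dots> \<longleftrightarrow> int m dvd 2 * X"
    by (simp add: cong_iff_dvd_diff X_def algebra_simps)
  also have "\<dots> \<longleftrightarrow> int m dvd X"
    using m by (simp add: coprime_dvd_mult_right_iff coprime_commute)
  also have "\<dots> \<longleftrightarrow> X = 0"
  proof -
    have "\<bar>X\<bar> < int m"
      using i k by (auto simp: X_def)
    then show ?thesis
      using dvd_imp_le_int[of X "int m"] by auto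
  qed
  finally show ?thesis by (auto simp: X_def)
qed

lemma (in group) nat_pow_mod_of_pow_eq_one:
  fixes i k :: nat
  assumes "x \<in> carrier G" and "x [^] k = \<one>"
  shows "x [^] i = x [^] (i mod k)"
proof -
  have "x [^] i = x [^] (k * (i div k) + i mod k)" by simp
  also have "\<dots> = (x [^] k) [^] (i div k) \<otimes> x [^] (i mod k)"
    using assms(1) by (simp add: nat_pow_mult nat_pow_pow)
  finally show ?thesis using assms by simp
qed

lemma (in group) subgroup_of_finite_mult_closed:
  assumes fin: "finite H" and sub: "H \<subseteq> carrier G" and one: "\<one> \<in> H"
    and mult: "\<And>x y. x \<in> H \<Longrightarrow> y \<in> H \<Longrightarrow> x \<otimes> y \<in> H"
  shows "subgroup H G"
proof (rule subgroupI)
  fix x assume x: "x \<in> H"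
  txt \<open>Left multiplication by \<open>x\<close> permutes the finite set \<open>H\<close>, so \<open>x\<close> has a right
    inverse in \<open>H\<close>.\<close>
  have "inj_on (\<lambda>y. x \<otimes> y) H"
    using x sub by (intro inj_onI) (metis Units_eq Units_l_cancel subsetD)
  then have "(\<lambda>y. x \<otimes> y) ` H = H"
    using fin mult x by (intro endo_inj_surj) auto
  then obtain y where "y \<in> H" "x \<otimes> y = \<one>"
    using one by (metis imageE)
  then show "inv x \<in> H"
    using x sub by (metis inv_comm inv_equality subsetD)
qed (use sub one mult in auto)

lemma card_odd_less_double: "card {j :: nat. j < 2 * n \<and> odd j} = n"
proof -
  have "{j :: nat. j < 2 * n \<and> odd j} = (\<lambda>t. 2 * t + 1) ` {..<n}"
    by (auto elim!: oddE simp: image_iff)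
  then show ?thesis
    by (simp add: card_image inj_on_def)
qed

lemma card_even_less_double: "card {j :: nat. j < 2 * n \<and> even j} = n"
proof -
  have "{j :: nat. j < 2 * n \<and> even j} = (\<lambda>t. 2 * t) ` {..<n}"
    by (auto elim!: evenE simp: image_iff)
  then show ?thesis
    by (simp add: card_image inj_on_def)
qed

definition metacyclic_part_size :: "nat \<Rightarrow> nat \<Rightarrow> nat \<Rightarrow> nat" where
  "metacyclic_part_size m n p = (if p < m then n else (m - 1) * n)"

locale metacyclic = group G for G (structure) +
  fixes a b :: 'g and m n :: nat
  assumes odd_m: "odd m" and m_gt_2: "m > 2" and n_pos: "n \<ge> 1"
    and a_closed [simp]: "a \<in> carrier G" and b_closed [simp]: "b \<in> carrier G"
    and generated: "carrier G = generate G {a, b}"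
    and card_carrier: "card (carrier G) = 2 * m * n"
    and a_pow_m: "a [^] m = \<one>" and b_pow_2n: "b [^] (2 * n) = \<one>"
    and b_conj_a: "b \<otimes> a \<otimes> inv b = inv a"
begin

definition ab_pow :: "nat \<Rightarrow> nat \<Rightarrow> 'g" where
  "ab_pow i j = a [^] i \<otimes> b [^] j"

definition exponents :: "(nat \<times> nat) set" where
  "exponents = {..<m} \<times> {..<2 * n}"

lemma ab_pow_closed [simp]: "ab_pow i j \<in> carrier G"
  by (simp add: ab_pow_def)

lemma finite_exponents [simp]: "finite exponents"
  by (simp add: exponents_def)

lemma card_exponents: "card exponents = 2 * m * n"
  by (simp add: exponents_def card_cartesian_product)

lemma finite_carrier: "finite (carrier G)"
  using card_carrier m_gt_2 n_pos by (intro card_ge_0_finite) auto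

lemma b_mult_a: "b \<otimes> a = a [^] (m - 1) \<otimes> b"
proof -
  have "a [^] (m - 1) \<otimes> a = \<one>"
    using m_gt_2 a_pow_m by (simp flip: nat_pow_Suc)
  then have "inv a = a [^] (m - 1)"
    by (simp add: inv_equality)
  moreover have "b \<otimes> a = b \<otimes> a \<otimes> inv b \<otimes> b"
    by (simp add: m_assoc)
  ultimately show ?thesis
    using b_conj_a by simp
qed

lemma b_mult_a_pow: "b \<otimes> a [^] i = a [^] ((m - 1) * i) \<otimes> b"
proof (induction i)
  case (Suc i)
  have "b \<otimes> a [^] Suc i = (b \<otimes> a [^] i) \<otimes> a"
    by (simp add: m_assoc)
  also have "\<dots> = a [^] ((m - 1) * i) \<otimes> a [^] (m - 1) \<otimes> b"
    by (simp add: Suc b_mult_a m_assoc)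
  also have "\<dots> = a [^] ((m - 1) * Suc i) \<otimes> b"
    by (simp add: nat_pow_mult add.commute)
  finally show ?case .
qed simp

lemma b_pow_mult_a_pow: "b [^] j \<otimes> a [^] i = a [^] ((m - 1) ^ j * i) \<otimes> b [^] j"
proof (induction j arbitrary: i)
  case (Suc j)
  have "b [^] Suc j \<otimes> a [^] i = b [^] j \<otimes> (b \<otimes> a [^] i)"
    by (simp add: m_assoc)
  also have "\<dots> = a [^] ((m - 1) ^ j * ((m - 1) * i)) \<otimes> b [^] j \<otimes> b"
    by (simp add: b_mult_a_pow Suc flip: m_assoc)
  also have "\<dots> = a [^] ((m - 1) ^ Suc j * i) \<otimes> b [^] Suc j"
    by (simp add: m_assoc ac_simps)
  finally show ?case .
qed simp

lemma ab_pow_mult: "ab_pow i j \<otimes> ab_pow k l = ab_pow (i + (m - 1) ^ j * k) (j + l)"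
proof -
  have "ab_pow i j \<otimes> ab_pow k l = a [^] i \<otimes> (b [^] j \<otimes> a [^] k) \<otimes> b [^] l"
    by (simp add: ab_pow_def m_assoc)
  also have "\<dots> = (a [^] i \<otimes> a [^] ((m - 1) ^ j * k)) \<otimes> (b [^] j \<otimes> b [^] l)"
    by (simp add: b_pow_mult_a_pow m_assoc)
  finally show ?thesis
    by (simp add: ab_pow_def nat_pow_mult)
qed

lemma ab_pow_mod: "ab_pow i j = ab_pow (i mod m) (j mod (2 * n))"
  unfolding ab_pow_def
  using nat_pow_mod_of_pow_eq_one[OF a_closed a_pow_m] nat_pow_mod_of_pow_eq_one[OF b_closed b_pow_2n]
  by metis

lemma ab_pow_in_image: "ab_pow i j \<in> case_prod ab_pow ` exponents"
proof -
  have "(i mod m, j mod (2 * n)) \<in> exponents"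
    using m_gt_2 n_pos by (simp add: exponents_def)
  then show ?thesis
    by (force simp: ab_pow_mod[of i j])
qed

lemma carrier_eq_ab_pow_image: "carrier G = case_prod ab_pow ` exponents"
proof
  have "subgroup (case_prod ab_pow ` exponents) G"
  proof (rule subgroup_of_finite_mult_closed)
    show "\<one> \<in> case_prod ab_pow ` exponents"
      using ab_pow_in_image[of 0 0] by (simp add: ab_pow_def)
  qed (auto simp: ab_pow_mult ab_pow_in_image)
  moreover have "{a, b} \<subseteq> case_prod ab_pow ` exponents"
    using ab_pow_in_image[of 1 0] ab_pow_in_image[of 0 1] by (simp add: ab_pow_def)
  ultimately show "carrier G \<subseteq> case_prod ab_pow ` exponents"
    using generated generate_subgroup_incl by auto
qed auto

lemma inj_on_ab_pow: "inj_on (case_prod ab_pow) exponents"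
proof -
  have "card (case_prod ab_pow ` exponents) = card exponents"
    using card_carrier card_exponents carrier_eq_ab_pow_image by simp
  then show ?thesis
    by (simp add: inj_on_iff_eq_card)
qed

lemma ab_pow_eq_iff:
  "ab_pow i j = ab_pow k l \<longleftrightarrow> i mod m = k mod m \<and> j mod (2 * n) = l mod (2 * n)"
proof -
  have "(i mod m, j mod (2 * n)) \<in> exponents" "(k mod m, l mod (2 * n)) \<in> exponents"
    using m_gt_2 n_pos by (auto simp: exponents_def)
  then show ?thesis
    using inj_on_ab_pow by (subst (1 2) ab_pow_mod) (auto simp: inj_on_def)
qed

lemma carrier_ab_powE:
  assumes "g \<in> carrier G"
  obtains i j where "i < m" and "j < 2 * n" and "g = ab_pow i j"
  using assms carrier_eq_ab_pow_image by (auto simp: exponents_def)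

lemma ab_pow_commute_iff:
  assumes "i < m" and "k < m"
  shows "ab_pow i j \<otimes> ab_pow k l = ab_pow k l \<otimes> ab_pow i j
    \<longleftrightarrow> (if odd l then i else 0) = (if odd j then k else 0)"
  unfolding ab_pow_mult ab_pow_eq_iff
  using add_pred_pow_mult_mod_eq_iff[OF odd_m assms, of j l] by (simp add: add.commute)

lemma ab_pow_in_center_iff:
  assumes "i < m"
  shows "ab_pow i j \<in> group_center G \<longleftrightarrow> i = 0 \<and> even j"
proof
  assume "ab_pow i j \<in> group_center G"
  then have comm: "ab_pow i j \<otimes> ab_pow k l = ab_pow k l \<otimes> ab_pow i j" for k l
    by (simp add: group_center_def)
  show "i = 0 \<and> even j"
    using comm[of 0 1] comm[of 1 0] assms m_gt_2
      ab_pow_commute_iff[where i = i and k = 0 and j = j and l = 1]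
      ab_pow_commute_iff[where i = i and k = 1 and j = j and l = 0]
    by (auto split: if_splits)
next
  assume "i = 0 \<and> even j"
  then have "ab_pow i j \<otimes> g = g \<otimes> ab_pow i j" if "g \<in> carrier G" for g
    using that ab_pow_commute_iff[of 0] by (elim carrier_ab_powE) auto
  then show "ab_pow i j \<in> group_center G"
    by (simp add: group_center_def)
qed

text \<open>The non-central elements fall into the \<open>m\<close> classes \<open>a\<^sup>i b\<^sup>j\<close>, \<open>j\<close> odd,
  indexed by \<open>i\<close>, and one more class of the \<open>a\<^sup>i b\<^sup>j\<close> with \<open>i \<noteq> 0\<close>, \<open>j\<close> even, indexed by \<open>m\<close>.\<close>

definition part :: "'g \<Rightarrow> nat" where
  "part g = (THE p. \<exists>i j. i < m \<and> j < 2 * n \<and> g = ab_pow i j \<and> p = (if odd j then i else m))"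

lemma part_ab_pow [simp]:
  assumes "i < m" and "j < 2 * n"
  shows "part (ab_pow i j) = (if odd j then i else m)"
proof -
  have "ab_pow i j = ab_pow k l \<Longrightarrow> k < m \<Longrightarrow> l < 2 * n \<Longrightarrow> k = i \<and> l = j" for k l
    using assms by (simp add: ab_pow_eq_iff)
  then show ?thesis
    unfolding part_def using assms by (intro the_equality) auto
qed

lemma ab_pow_in_nc_vertices_iff:
  assumes "i < m"
  shows "ab_pow i j \<in> nc_vertices G \<longleftrightarrow> i \<noteq> 0 \<or> odd j"
  using ab_pow_in_center_iff[OF assms] by (auto simp: nc_vertices_def)

lemma nc_vertices_ab_powE:
  assumes "g \<in> nc_vertices G"
  obtains i j where "i < m" and "j < 2 * n" and "i \<noteq> 0 \<or> odd j" and "g = ab_pow i j"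
  using assms ab_pow_in_nc_vertices_iff by (metis DiffD1 carrier_ab_powE nc_vertices_def)

sublocale nc_multipartite G part
proof
  show "finite (nc_vertices G)"
    using finite_carrier by (simp add: nc_vertices_def)
  show "g \<otimes> h = h \<otimes> g \<longleftrightarrow> part g = part h"
    if "g \<in> nc_vertices G" and "h \<in> nc_vertices G" for g h
    using that by (elim nc_vertices_ab_powE) (auto simp: ab_pow_commute_iff)
  have "ab_pow 0 1 \<in> nc_vertices G" and "ab_pow 1 0 \<in> nc_vertices G"
    using m_gt_2 by (simp_all add: ab_pow_in_nc_vertices_iff)
  moreover have "part (ab_pow 0 1) \<noteq> part (ab_pow 1 0)"
    using m_gt_2 n_pos by simp
  ultimately show "\<exists>g \<in> nc_vertices G. \<exists>h \<in> nc_vertices G. part g \<noteq> part h"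
    by blast
qed

lemma part_range: "part ` nc_vertices G \<subseteq> {..<Suc m}"
  by (auto elim!: nc_vertices_ab_powE)

lemma part_size_less_m:
  assumes "p < m"
  shows "part_size p = n"
proof -
  have "{g \<in> nc_vertices G. part g = p} = ab_pow p ` {j. j < 2 * n \<and> odd j}"
    using assms by (auto elim!: nc_vertices_ab_powE simp: ab_pow_in_nc_vertices_iff split: if_splits)
  moreover have "inj_on (ab_pow p) {j. j < 2 * n \<and> odd j}"
    by (auto intro!: inj_onI simp: ab_pow_eq_iff)
  ultimately show ?thesis
    by (simp add: part_size_def card_image card_odd_less_double)
qed

lemma part_size_m: "part_size m = (m - 1) * n"
proof -
  have "{g \<in> nc_vertices G. part g = m} = case_prod ab_pow ` ({1..<m} \<times> {j. j < 2 * n \<and> even j})"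
    by (auto elim!: nc_vertices_ab_powE simp: ab_pow_in_nc_vertices_iff image_iff split: if_splits)
  moreover have "inj_on (case_prod ab_pow) ({1..<m} \<times> {j. j < 2 * n \<and> even j})"
    by (rule inj_on_subset[OF inj_on_ab_pow]) (auto simp: exponents_def)
  ultimately show ?thesis
    by (simp add: part_size_def card_image card_cartesian_product card_even_less_double)
qed

lemma part_size_eq: "p < Suc m \<Longrightarrow> part_size p = metacyclic_part_size m n p"
  by (auto simp: metacyclic_part_size_def part_size_less_m part_size_m less_Suc_eq)

end

section \<open>The spectrum\<close>

lemma multipartite_DQ_diag_metacyclic:
  assumes "m \<ge> 1"
  shows "multipartite_DQ_diag (Suc m) (metacyclic_part_size m n) p
    = (if p < m then 2 * real m * real n - 4 else (3 * real m - 2) * real n - 4)"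
proof -
  have "(\<Sum>q<Suc m. metacyclic_part_size m n q) = m * n + (m - 1) * n"
    by (simp add: metacyclic_part_size_def)
  moreover have "real (m * n + (m - 1) * n) = real m * real n + (real m - 1) * real n"
    by (simp only: of_nat_add of_nat_mult of_nat_diff[OF assms] of_nat_1)
  moreover have "real ((m - 1) * n) = (real m - 1) * real n"
    by (simp only: of_nat_mult of_nat_diff[OF assms] of_nat_1)
  ultimately show ?thesis
    by (simp add: multipartite_DQ_diag_def metacyclic_part_size_def algebra_simps)
qed

lemma prod_metacyclic_DQ_diag:
  assumes "m \<ge> 1"
  shows "(\<Prod>p<Suc m. [:- multipartite_DQ_diag (Suc m) (metacyclic_part_size m n) p, 1:]
            ^ (metacyclic_part_size m n p - 1))
    = [:- (2 * real m * real n - 4), 1:] ^ (m * (n - 1))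
      * [:- ((3 * real m - 2) * real n - 4), 1:] ^ ((m - 1) * n - 1)"
proof -
  have "(\<Prod>p<m. [:- multipartite_DQ_diag (Suc m) (metacyclic_part_size m n) p, 1:]
            ^ (metacyclic_part_size m n p - 1))
      = (\<Prod>p<m. [:- (2 * real m * real n - 4), 1:] ^ (n - 1))"
    using assms by (intro prod.cong) (simp_all add: multipartite_DQ_diag_metacyclic metacyclic_part_size_def)
  then show ?thesis
    using assms by (simp add: multipartite_DQ_diag_metacyclic metacyclic_part_size_def mult.commute
        flip: power_mult)
qed

lemma metacyclic_quadratic_factorization:
  fixes m n :: nat and t1 t2 :: real
  assumes t1: "(real m - 1) * t1 ^ 2 - (2 * real m - 5) * t1 - real m = 0"
    and t2: "(real m - 1) * t2 ^ 2 - (2 * real m - 5) * t2 - real m = 0" and "t1 \<noteq> t2"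
  defines "K \<equiv> 3 * real m * real n + real n - 4"
  shows "[: K * (K + (2 * real m - 5) * real n) - real m * (real m - 1) * real n ^ 2,
            - (2 * K + (2 * real m - 5) * real n), 1:]
    = [:- (real n * t1 * (real m - 1) + K), 1:] * [:- (real n * t2 * (real m - 1) + K), 1:]"
proof -
  have "(real m - 1) * t1 ^ 2 + - (2 * real m - 5) * t1 + - real m = 0"
    and "(real m - 1) * t2 ^ 2 + - (2 * real m - 5) * t2 + - real m = 0"
    using t1 t2 by (simp_all only: diff_conv_add_uminus mult_minus_left)
  from quadratic_roots_sum_prod[OF this \<open>t1 \<noteq> t2\<close>]
  have sum: "(real m - 1) * (t1 + t2) = 2 * real m - 5" and prod: "(real m - 1) * (t1 * t2) = - real m"
    by simp_all
  have "(real n * t1 * (real m - 1) + K) + (real n * t2 * (real m - 1) + K)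
      = 2 * K + real n * ((real m - 1) * (t1 + t2))"
    by (simp add: algebra_simps)
  moreover have "(real n * t1 * (real m - 1) + K) * (real n * t2 * (real m - 1) + K)
      = K * K + K * real n * ((real m - 1) * (t1 + t2)) + real n ^ 2 * (real m - 1) * ((real m - 1) * (t1 * t2))"
    by (simp add: algebra_simps power2_eq_square)
  ultimately show ?thesis
    unfolding sum prod by (simp add: algebra_simps)
qed

lemma char_poly_metacyclic_DQ_quotient:
  fixes t1 t2 :: real
  assumes "m \<ge> 2"
    and "(real m - 1) * t1 ^ 2 - (2 * real m - 5) * t1 - real m = 0"
    and "(real m - 1) * t2 ^ 2 - (2 * real m - 5) * t2 - real m = 0" and "t1 \<noteq> t2"
  shows "char_poly (multipartite_DQ_quotient (Suc m) (metacyclic_part_size m n))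
    = [:- ((2 * real m + 1) * real n - 4), 1:] ^ (m - 1)
      * ([:- (real n * t1 * (real m - 1) + (3 * real m * real n + real n - 4)), 1:]
      * [:- (real n * t2 * (real m - 1) + (3 * real m * real n + real n - 4)), 1:])"
proof -
  txt \<open>The \<open>m\<close> equal parts form one block of an equitable partition of the quotient matrix.\<close>
  define \<pi> where "\<pi> p = (if p < m then 0 else 1 :: nat)" for p
  define C where "C i j = (if j = 0 then real n else if i = 0 then (real m - 1) * real n
    else 2 * (real m - 1) * real n)" for i j :: nat
  define d where "d i = (if i = 0 then (2 * real m + 1) * real n - 4 else (3 * real m - 2) * real n - 4)"
    for i :: nat
  have sizes: "block_size (Suc m) \<pi> 0 = m" "block_size (Suc m) \<pi> (Suc 0) = 1"
  proof -
    have "{u. u < Suc m \<and> \<pi> u = 0} = {..<m}" and "{u. u < Suc m \<and> \<pi> u = Suc 0} = {m}"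
      by (auto simp: \<pi>_def)
    then show "block_size (Suc m) \<pi> 0 = m" "block_size (Suc m) \<pi> (Suc 0) = 1"
      by (simp_all add: block_size_def)
  qed
  have "multipartite_DQ_quotient (Suc m) (metacyclic_part_size m n) = block_mat (Suc m) \<pi> C d"
    using assms(1)
    by (intro eq_matI) (auto simp: multipartite_DQ_quotient_def quotient_mat_def block_mat_def
        multipartite_DQ_diag_metacyclic metacyclic_part_size_def \<pi>_def C_def d_def of_nat_diff algebra_simps)
  also have "char_poly \<dots> = (\<Prod>i<2. [:- d i, 1:] ^ (block_size (Suc m) \<pi> i - 1))
      * char_poly (quotient_mat 2 C d (block_size (Suc m) \<pi>))"
    using assms(1) sizes by (intro char_poly_block_mat) (auto simp: \<pi>_def less_2_cases_iff)
  also have "(\<Prod>i<2. [:- d i, 1:] ^ (block_size (Suc m) \<pi> i - 1)) = [:- ((2 * real m + 1) * real n - 4), 1:] ^ (m - 1)"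
    by (simp add: numeral_2_eq_2 sizes d_def)
  also have "char_poly (quotient_mat 2 C d (block_size (Suc m) \<pi>))
      = [:- (real n * t1 * (real m - 1) + (3 * real m * real n + real n - 4)), 1:]
      * [:- (real n * t2 * (real m - 1) + (3 * real m * real n + real n - 4)), 1:]"
    unfolding metacyclic_quadratic_factorization[OF assms(2-4), symmetric]
    by (subst char_poly_mat_2x2) (auto simp: quotient_mat_def sizes C_def d_def algebra_simps power2_eq_square)
  finally show ?thesis .
qed

theorem theorem6p5:
  fixes G :: "('g, 'c) monoid_scheme" and a b :: 'g and m n :: nat and t1 t2 :: real
    and f :: "nat \<Rightarrow> 'g"
  assumes "odd m" and "m > 2" and "n \<ge> 1"
    and "group G"
    and "a \<in> carrier G" and "b \<in> carrier G"
    and "carrier G = generate G {a, b}"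
    and "finite (carrier G)" and "card (carrier G) = 2 * m * n"
    and "a [^]\<^bsub>G\<^esub> m = \<one>\<^bsub>G\<^esub>" and "b [^]\<^bsub>G\<^esub> (2 * n) = \<one>\<^bsub>G\<^esub>"
    and "b \<otimes>\<^bsub>G\<^esub> a \<otimes>\<^bsub>G\<^esub> inv\<^bsub>G\<^esub> b = inv\<^bsub>G\<^esub> a"
    and "(real m - 1) * t1 ^ 2 - (2 * real m - 5) * t1 - real m = 0"
    and "(real m - 1) * t2 ^ 2 - (2 * real m - 5) * t2 - real m = 0"
    and "t1 \<noteq> t2"
    and "bij_betw f {0..<card (nc_vertices G)} (nc_vertices G)"
  shows "char_poly (nc_DQ_mat G f) =
    (\<Prod>e \<in># replicate_mset (m * (n - 1)) (2 * real m * real n - 4)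
          + replicate_mset (m - 1) ((2 * real m + 1) * real n - 4)
          + replicate_mset ((m - 1) * n - 1) ((3 * real m - 2) * real n - 4)
          + {# real n * t1 * (real m - 1) + (3 * real m * real n + real n - 4),
               real n * t2 * (real m - 1) + (3 * real m * real n + real n - 4) #}.
       [:- e, 1:])"
proof -
  interpret metacyclic G a b m n
    using assms by (simp add: metacyclic_def metacyclic_axioms_def)
  have "m \<ge> 1" and "m \<ge> 2" and "\<And>p. metacyclic_part_size m n p \<noteq> 0"
    using assms(2,3) by (simp_all add: metacyclic_part_size_def)
  from char_poly_nc_DQ_mat[OF assms(16) part_range part_size_eq this(3)]
  show ?thesis
    unfolding prod_metacyclic_DQ_diag[OF \<open>m \<ge> 1\<close>]
      char_poly_metacyclic_DQ_quotient[OF \<open>m \<ge> 2\<close> assms(13-15)]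
    by (simp only: image_mset_union prod_mset.union image_replicate_mset prod_mset_replicate_mset
        image_mset_add_mset image_mset_empty prod_mset.add_mset prod_mset_empty mult_1_right ac_simps)
qed

end
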